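(* Let $r>c>\nu$ and $0<t<r-\nu$, set $R=(r-c)/(r-\nu)$, $\gamma=t/(r-\nu)$, fix $\rho\in[0,1)$, and for each integer $n\ge1$ let $L_n=\sqrt{n/(1+(n-1)\rho)}$ and let $Y_n$ be the unique real solution of $$R=\gamma\,\Phi(Y_n)+(1-\gamma)\,\Phi(L_nY_n),$$ with $\Phi$ the standard normal cdf. If $R>1/2$, then $0<Y_1<L_2Y_2<L_3Y_3<\dots<L_nY_n<\dots$. If $R<1/2$, then $0>Y_1>L_2Y_2>L_3Y_3>\dots>L_nY_n>\dots$.
   Context: $Y_n$ is the standardized optimal common order quantity of a transshipment coalition of $n$ identical newsvendors (selling price $r$, cost $c$, salvage value $\nu$, unit transportation cost $t$) facing jointly normal demands with common pairwise correlation $\rho$. Note $L_1=1$. The right-hand side of the defining equation is strictly increasing in $Y_n$ from $0$ to $1$, so $Y_n$ is well defined. *)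

theory Defs
  imports "HOL-Probability.Probability"
begin

definition Phi :: "real \<Rightarrow> real" where
  "Phi x = (LBINT y:{..x}. std_normal_density y)"

definition Lfac :: "real \<Rightarrow> nat \<Rightarrow> real" where
  "Lfac \<rho> n = sqrt (real n / (1 + (real n - 1) * \<rho>))"

definition Yopt :: "real \<Rightarrow> real \<Rightarrow> real \<Rightarrow> real \<Rightarrow> real \<Rightarrow> nat \<Rightarrow> real" where
  "Yopt r c \<nu> t \<rho> n = (THE y. (r - c) / (r - \<nu>) =
      t / (r - \<nu>) * Phi y + (1 - t / (r - \<nu>)) * Phi (Lfac \<rho> n * y))"

end

theory Submission
  imports Defs
begin

text \<open>Substituting \<open>x = L\<^sub>n Y\<^sub>n\<close>, the defining equation becomes
  \<open>R = \<gamma> \<Phi>(x / L\<^sub>n) + (1 - \<gamma>) \<Phi>(x)\<close>. Its right-hand side is strictly increasing in \<open>x\<close>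
  and, for \<open>x > 0\<close>, strictly decreasing in \<open>L\<^sub>n\<close>; since \<open>L\<^sub>n\<close> strictly increases with \<open>n\<close>,
  the positive root \<open>x\<close> must strictly increase as well. The root is positive when \<open>R > 1/2\<close>
  because the right-hand side equals \<open>1/2\<close> at \<open>x = 0\<close>, and the case \<open>R < 1/2\<close> is
  the mirror image under \<open>\<Phi>(-x) = 1 - \<Phi>(x)\<close>.\<close>

interpretation std_normal: real_distribution std_normal_distribution
  by (rule real_dist_normal_dist)

lemma measure_std_normal_distribution:
  assumes "A \<in> sets borel"
  shows "measure std_normal_distribution A = (LBINT y:A. std_normal_density y)"
proof -
  have "measure std_normal_distribution A = (\<integral>y. indicator A y \<partial>std_normal_distribution)"
    by simp
  also have "\<dots> = (LBINT y:A. std_normal_density y)"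
    using assms unfolding set_lebesgue_integral_def by (subst integral_density) (auto simp: mult.commute)
  finally show ?thesis .
qed

lemma Phi_eq_cdf: "Phi = cdf std_normal_distribution"
  by (simp add: fun_eq_iff Phi_def cdf_def measure_std_normal_distribution)

lemma std_normal_singleton_null: "{x} \<in> null_sets std_normal_distribution"
proof
  have "AE z in lborel. std_normal_density z * indicator {x} z = 0"
    using AE_lborel_singleton[of x] by eventually_elim simp
  then show "emeasure std_normal_distribution {x} = 0"
    by (simp add: emeasure_density nn_integral_cong_AE[where v="\<lambda>_. 0"])
qed simp

lemma isCont_Phi: "isCont Phi x"
  unfolding Phi_eq_cdf std_normal.isCont_cdf
  using std_normal_singleton_null[of x] by (simp add: measure_def null_setsD1)

lemma measure_std_normal_Ioc_pos:
  assumes "x < y" shows "0 < measure std_normal_distribution {x<..y}"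
proof -
  have "\<not> (AE z in lborel. z \<notin> {x<..y})"
    using assms AE_iff_measurable[of "{x<..y}" lborel "\<lambda>z. z \<notin> {x<..y}"]
    by (auto simp: set_eq_iff)
  moreover have "AE z in lborel. z \<notin> {x<..y}"
    if "AE z in lborel. indicator {x<..y} z * std_normal_density z = 0"
    using that
    by eventually_elim
      (simp add: indicator_def normal_density_pos[OF zero_less_one, THEN less_imp_neq, THEN not_sym]
         split: if_splits)
  ultimately have "\<not> (AE z in lborel. indicator {x<..y} z * std_normal_density z = 0)"
    by blast
  then have "(LBINT z:{x<..y}. std_normal_density z) \<noteq> 0"
    unfolding set_lebesgue_integral_def
    by (subst integral_nonneg_eq_0_iff_AE) (auto intro!: integrable_real_mult_indicator simp: mult.commute)
  then show ?thesis
    using measure_nonneg[of std_normal_distribution "{x<..y}"]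
    by (simp add: measure_std_normal_distribution)
qed

lemma Phi_strict_mono: "strict_mono Phi"
  unfolding Phi_eq_cdf
  by (rule strict_monoI) (use std_normal.cdf_diff_eq measure_std_normal_Ioc_pos in fastforce)

lemma Phi_minus: "Phi (- x) = 1 - Phi x"
proof -
  have "Phi (- x) = (LBINT y:{x..}. std_normal_density y)"
    unfolding Phi_def set_lebesgue_integral_def
    using lborel_integral_real_affine[where c="-1" and t=0 and f="\<lambda>y. indicator {..-x} y *\<^sub>R std_normal_density y"]
    by (simp add: std_normal_density_def indicator_def)
  also have "\<dots> = measure std_normal_distribution {x..}"
    by (simp add: measure_std_normal_distribution)
  also have "\<dots> = measure std_normal_distribution ((UNIV - {..x}) \<union> {x})"
    by (rule arg_cong[where f="measure _"]) auto
  also have "\<dots> = 1 - Phi x"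
    using std_normal.prob_compl[of "{..x}"]
    by (subst measure_Un_null_set) (auto simp: std_normal_singleton_null Phi_eq_cdf cdf_def)
  finally show ?thesis .
qed

lemma Phi_at_bot: "(Phi \<longlongrightarrow> 0) at_bot"
  unfolding Phi_eq_cdf by (rule std_normal.cdf_lim_at_bot)

lemma Phi_at_top: "(Phi \<longlongrightarrow> 1) at_top"
  unfolding Phi_eq_cdf by (rule std_normal.cdf_lim_at_top_prob)

lemma Phi_zero: "Phi 0 = 1/2"
  using Phi_minus[of 0] by simp

lemma ex1_eq_if_strict_mono_tendsto:
  fixes f :: "real \<Rightarrow> real"
  assumes "continuous_on UNIV f" "strict_mono f"
    and "(f \<longlongrightarrow> a) at_bot" "(f \<longlongrightarrow> b) at_top" "a < R" "R < b"
  shows "\<exists>!y. f y = R"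
proof (rule ex_ex1I)
  obtain y0 where y0: "\<And>y. y \<le> y0 \<Longrightarrow> f y < R"
    using order_tendstoD(2)[OF assms(3,5)] by (auto simp: eventually_at_bot_linorder)
  obtain y1 where y1: "\<And>y. y1 \<le> y \<Longrightarrow> R < f y"
    using order_tendstoD(1)[OF assms(4,6)] by (auto simp: eventually_at_top_linorder)
  have "f (min y0 y1) \<le> R"
    using y0[of "min y0 y1"] by simp
  moreover have "R \<le> f (max y0 y1)"
    using y1[of "max y0 y1"] by simp
  ultimately show "\<exists>y. f y = R"
    using IVT'[OF _ _ _ continuous_on_subset[OF assms(1) subset_UNIV]] by force
next
  fix y z assume "f y = R" "f z = R"
  then show "y = z" using strict_mono_eq[OF assms(2), of y z] by simp
qed

definition Phi_mix :: "real \<Rightarrow> real \<Rightarrow> real \<Rightarrow> real" where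
  "Phi_mix g L y = g * Phi y + (1 - g) * Phi (L * y)"

lemma Phi_mix_strict_mono:
  assumes "0 \<le> g" "g \<le> 1" "0 < L"
  shows "strict_mono (Phi_mix g L)"
proof (rule strict_monoI)
  fix x y :: real assume "x < y"
  then have "Phi x < Phi y" "Phi (L * x) < Phi (L * y)"
    using assms(3) by (simp_all add: strict_monoD[OF Phi_strict_mono])
  then show "Phi_mix g L x < Phi_mix g L y"
    unfolding Phi_mix_def using assms(1,2)
    by (smt (verit) mult_left_mono mult_strict_left_mono)
qed

lemma Phi_mix_minus: "Phi_mix g L (- y) = 1 - Phi_mix g L y"
  by (simp add: Phi_mix_def Phi_minus algebra_simps)

lemma Phi_mix_zero: "Phi_mix g L 0 = 1/2"
  by (simp add: Phi_mix_def Phi_zero field_simps)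

lemma ex1_Phi_mix_eq:
  assumes "0 \<le> g" "g \<le> 1" "0 < L" "0 < R" "R < 1"
  shows "\<exists>!y. Phi_mix g L y = R"
proof (rule ex1_eq_if_strict_mono_tendsto[OF _ Phi_mix_strict_mono[OF assms(1-3)]])
  have "isCont (Phi_mix g L) y" for y
    unfolding Phi_mix_def by (intro continuous_intros isCont_Phi isCont_o2[OF _ isCont_Phi])
  then show "continuous_on UNIV (Phi_mix g L)"
    by (simp add: continuous_at_imp_continuous_on)
  have bot: "filterlim (\<lambda>y. L * y) at_bot at_bot" and top: "filterlim (\<lambda>y. L * y) at_top at_top"
    using filterlim_tendsto_pos_mult_at_bot[OF tendsto_const assms(3) filterlim_ident]
      filterlim_tendsto_pos_mult_at_top[OF tendsto_const assms(3) filterlim_ident]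
    by simp_all
  show "(Phi_mix g L \<longlongrightarrow> g * 0 + (1 - g) * 0) at_bot"
    unfolding Phi_mix_def
    by (intro tendsto_add tendsto_mult_left Phi_at_bot filterlim_compose[OF Phi_at_bot bot])
  show "(Phi_mix g L \<longlongrightarrow> g * 1 + (1 - g) * 1) at_top"
    unfolding Phi_mix_def
    by (intro tendsto_add tendsto_mult_left Phi_at_top filterlim_compose[OF Phi_at_top top])
qed (use assms in auto)

lemma Phi_mix_root_pos:
  assumes "0 \<le> g" "g \<le> 1" "0 < L" "1/2 < R" "Phi_mix g L y = R"
  shows "0 < y"
  using assms strict_mono_less[OF Phi_mix_strict_mono[OF assms(1-3)], of 0 y]
  by (simp add: Phi_mix_zero)

lemma Phi_mix_root_neg:
  assumes "0 \<le> g" "g \<le> 1" "0 < L" "R < 1/2" "Phi_mix g L y = R"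
  shows "y < 0"
  using Phi_mix_root_pos[of g L "1 - R" "- y"] assms by (simp add: Phi_mix_minus)

lemma Phi_mix_rescaled_strict_antimono:
  assumes "0 < g" "0 < x" "0 < L1" "L1 < L2"
  shows "Phi_mix g L2 (x / L2) < Phi_mix g L1 (x / L1)"
proof -
  have "x / L2 < x / L1"
    using assms by (simp add: divide_strict_left_mono)
  then have "Phi (x / L2) < Phi (x / L1)"
    by (simp add: strict_monoD[OF Phi_strict_mono])
  then show ?thesis
    using assms by (simp add: Phi_mix_def)
qed

lemma Phi_mix_scaled_roots_less:
  assumes "0 < g" "g \<le> 1" "0 < L1" "L1 < L2" "1/2 < R"
    and roots: "Phi_mix g L1 y1 = R" "Phi_mix g L2 y2 = R"
  shows "L1 * y1 < L2 * y2"
proof (rule ccontr)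
  assume "\<not> L1 * y1 < L2 * y2"
  then have "y2 \<le> (L1 * y1) / L2"
    using assms(3,4) by (simp add: pos_le_divide_eq mult.commute)
  have "0 < L1 * y1"
    using Phi_mix_root_pos[OF _ assms(2,3,5) roots(1)] assms(1,3) by simp
  have "R \<le> Phi_mix g L2 ((L1 * y1) / L2)"
    using \<open>y2 \<le> (L1 * y1) / L2\<close> roots(2)[symmetric] assms(1-4)
      strict_mono_less_eq[OF Phi_mix_strict_mono[of g L2]]
    by simp
  also have "\<dots> < Phi_mix g L1 ((L1 * y1) / L1)"
    by (rule Phi_mix_rescaled_strict_antimono) (use assms \<open>0 < L1 * y1\<close> in auto)
  also have "\<dots> = R"
    using assms(3) roots(1) by simp
  finally show False by simp
qed

lemma Phi_mix_scaled_roots_greater: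
  assumes "0 < g" "g \<le> 1" "0 < L1" "L1 < L2" "R < 1/2"
    and roots: "Phi_mix g L1 y1 = R" "Phi_mix g L2 y2 = R"
  shows "L2 * y2 < L1 * y1"
  using Phi_mix_scaled_roots_less[of g L1 L2 "1 - R" "- y1" "- y2"] assms
  by (simp add: Phi_mix_minus)

lemma Lfac_pos:
  assumes "0 \<le> \<rho>" "1 \<le> n"
  shows "0 < Lfac \<rho> n"
  using assms by (simp add: Lfac_def add_pos_nonneg)

lemma Lfac_less_Suc:
  assumes "0 \<le> \<rho>" "\<rho> < 1" "1 \<le> n"
  shows "Lfac \<rho> n < Lfac \<rho> (Suc n)"
proof -
  have "real n * (1 + real n * \<rho>) < (real n + 1) * (1 + (real n - 1) * \<rho>)"
    using assms by (simp add: algebra_simps)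
  then have "real n / (1 + (real n - 1) * \<rho>) < (real n + 1) / (1 + real n * \<rho>)"
    using assms by (simp add: divide_simps add_pos_nonneg)
  then show ?thesis
    unfolding Lfac_def by (simp add: add.commute)
qed

lemma Phi_mix_Yopt:
  assumes "\<nu> < c" "c < r" "0 < t" "t < r - \<nu>" "0 \<le> \<rho>" "1 \<le> n"
  shows "Phi_mix (t / (r - \<nu>)) (Lfac \<rho> n) (Yopt r c \<nu> t \<rho> n) = (r - c) / (r - \<nu>)"
proof -
  have "\<exists>!y. Phi_mix (t / (r - \<nu>)) (Lfac \<rho> n) y = (r - c) / (r - \<nu>)"
    using assms by (intro ex1_Phi_mix_eq Lfac_pos) simp_all
  then have "\<exists>!y. (r - c) / (r - \<nu>) = Phi_mix (t / (r - \<nu>)) (Lfac \<rho> n) y"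
    by (simp add: eq_commute)
  from theI'[OF this] show ?thesis
    unfolding Yopt_def Phi_mix_def by simp
qed

theorem theorem4:
  fixes r c \<nu> t \<rho> :: real
  assumes "\<nu> < c" and "c < r"
    and "0 < t" and "t < r - \<nu>"
    and "0 \<le> \<rho>" and "\<rho> < 1"
  shows "((r - c) / (r - \<nu>) > 1/2 \<longrightarrow>
            0 < Yopt r c \<nu> t \<rho> 1 \<and>
            (\<forall>n::nat. n \<ge> 1 \<longrightarrow>
               Lfac \<rho> n * Yopt r c \<nu> t \<rho> n < Lfac \<rho> (n + 1) * Yopt r c \<nu> t \<rho> (n + 1)))
       \<and> ((r - c) / (r - \<nu>) < 1/2 \<longrightarrow>
            0 > Yopt r c \<nu> t \<rho> 1 \<and>
            (\<forall>n::nat. n \<ge> 1 \<longrightarrow>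
               Lfac \<rho> n * Yopt r c \<nu> t \<rho> n > Lfac \<rho> (n + 1) * Yopt r c \<nu> t \<rho> (n + 1)))"
proof -
  define R g where "R = (r - c) / (r - \<nu>)" and "g = t / (r - \<nu>)"
  define Y where "Y = Yopt r c \<nu> t \<rho>"
  have g: "0 < g" "g \<le> 1"
    using assms by (simp_all add: g_def)
  have root: "Phi_mix g (Lfac \<rho> n) (Y n) = R" if "1 \<le> n" for n
    using Phi_mix_Yopt[OF assms(1-5) that] by (simp add: R_def g_def Y_def)
  have L: "0 < Lfac \<rho> n" "Lfac \<rho> n < Lfac \<rho> (n + 1)" if "1 \<le> n" for n
    using Lfac_pos[OF assms(5) that] Lfac_less_Suc[OF assms(5,6) that] by simp_all
  have "0 < Y 1 \<and> (\<forall>n\<ge>1. Lfac \<rho> n * Y n < Lfac \<rho> (n + 1) * Y (n + 1))" if "1/2 < R"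
    using Phi_mix_root_pos[OF _ g(2) L(1) that root, of 1]
      Phi_mix_scaled_roots_less[OF g L that root root] g
    by simp
  moreover have "Y 1 < 0 \<and> (\<forall>n\<ge>1. Lfac \<rho> (n + 1) * Y (n + 1) < Lfac \<rho> n * Y n)" if "R < 1/2"
    using Phi_mix_root_neg[OF _ g(2) L(1) that root, of 1]
      Phi_mix_scaled_roots_greater[OF g L that root root] g
    by simp
  ultimately show ?thesis
    unfolding R_def Y_def by auto
qed

end
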